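(* Let $G$ be a crown-free linear $3$-graph on $n$ vertices, and let $s$ be the number of vertices of $G$ of degree at least $6$. If $s \leq 2$, then the number of edges of $G$ satisfies $$|E(G)| \leq \frac{10(n-s)}{7}.$$
   Context: A linear $3$-graph $G=(V,E)$ consists of a finite vertex set $V$ and a collection $E$ of $3$-element subsets of $V$ (edges) such that any two distinct edges share at most one vertex. The degree $d(v)$ of a vertex $v$ is the number of edges containing $v$. The crown $C_{13}$ is the linear $3$-graph on $9$ vertices $\{a,b,c,d,e,f,g,h,i\}$ with edges $\{a,b,c\},\{a,d,e\},\{b,f,g\},\{c,h,i\}$. A linear $3$-graph is crown-free if it contains no copy of $C_{13}$, i.e. no four of its edges together with an injective assignment of the nine vertices form the crown. *)

theory Defs
  imports Complex_Main
begin

definition linear_3graph :: "'a set \<Rightarrow> 'a set set \<Rightarrow> bool" where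
  "linear_3graph V E \<longleftrightarrow> finite V \<and>
     (\<forall>e\<in>E. e \<subseteq> V \<and> card e = 3) \<and>
     (\<forall>e\<in>E. \<forall>f\<in>E. e \<noteq> f \<longrightarrow> card (e \<inter> f) \<le> 1)"

definition degree :: "'a set set \<Rightarrow> 'a \<Rightarrow> nat" where
  "degree E v = card {e \<in> E. v \<in> e}"

definition has_crown :: "'a set set \<Rightarrow> bool" where
  "has_crown E \<longleftrightarrow> (\<exists>a b c d e f g h i.
     distinct [a, b, c, d, e, f, g, h, i] \<and>
     {a, b, c} \<in> E \<and> {a, d, e} \<in> E \<and> {b, f, g} \<in> E \<and> {c, h, i} \<in> E)"

definition crown_free :: "'a set set \<Rightarrow> bool" where
  "crown_free E \<longleftrightarrow> \<not> has_crown E"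

end

theory Submission
  imports Defs
begin

text \<open>
  The proof is by discharging. Every vertex outside the set \<open>S\<close> of vertices of degree at
  least 6 has charge 1, which it distributes among its edges; no vertex gives away more than 1,
  while every edge receives at least 7/10, so double counting gives \<open>7/10 |E| \<le> |V| - |S|\<close>.

  A vertex of degree \<open>d \<in> {1, 2, 4}\<close> gives \<open>1/d\<close> to each edge. A vertex of degree 3 gives 7/20
  to the at most \<open>|S| \<le> 2\<close> edges meeting \<open>S\<close> and 3/10 to the others. A vertex of degree 5
  gives 1/5, except that it gives 1/4 to a heavy edge (degrees 5, 5 and 4 or 5) and then only
  3/16 to its other edges; it lies on at most one heavy edge.

  Crown-freeness enters twice. An edge with degrees at least 2, 4 and 6 would be the centre of
  a crown, which settles the edges meeting \<open>S\<close>. And around a heavy edge \<open>abc\<close> the graph is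
  rigid: \<open>a\<close> and \<open>b\<close> have the same eight further neighbours, which form two 4-cycles whose
  sides alternate between edges at \<open>a\<close> and edges at \<open>b\<close>, the other edges at \<open>c\<close> are
  diagonals of these cycles, and all eight vertices have degree at most 3. Hence an edge that
  touches a heavy edge without being heavy has two vertices of degree at most 3, which make up
  for the reduced share of the third.
\<close>

section \<open>Linear 3-graphs\<close>

definition neighbours :: "'a set set \<Rightarrow> 'a \<Rightarrow> 'a set" where
  "neighbours E v = {u. u \<noteq> v \<and> (\<exists>e\<in>E. v \<in> e \<and> u \<in> e)}"

locale lin3graph =
  fixes V :: "'a set" and E :: "'a set set"
  assumes linear: "linear_3graph V E"
begin

lemma finite_V: "finite V"
  using linear unfolding linear_3graph_def by blast

lemma edge_subset: "e \<in> E \<Longrightarrow> e \<subseteq> V"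
  using linear unfolding linear_3graph_def by blast

lemma card_edge: "e \<in> E \<Longrightarrow> card e = 3"
  using linear unfolding linear_3graph_def by blast

lemma finite_edge: "e \<in> E \<Longrightarrow> finite e"
  using card_edge card.infinite by fastforce

lemma finite_E: "finite E"
  using finite_V edge_subset by (meson Pow_iff finite_Pow_iff rev_finite_subset subsetI)

lemma edge_eqI:
  assumes "f \<in> E" "g \<in> E" "x \<in> f" "x \<in> g" "y \<in> f" "y \<in> g" "x \<noteq> y"
  shows "f = g"
proof (rule ccontr)
  assume "f \<noteq> g"
  then have "card (f \<inter> g) \<le> 1"
    using linear assms(1,2) unfolding linear_3graph_def by blast
  moreover have "finite (f \<inter> g)"
    using finite_edge[OF assms(1)] by blast
  moreover have "{x, y} \<subseteq> f \<inter> g"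
    using assms by blast
  ultimately have "card {x, y} \<le> 1"
    by (meson card_mono le_trans)
  with assms(7) show False
    by simp
qed

lemma edge_distinct: "{x, y, z} \<in> E \<Longrightarrow> distinct [x, y, z]"
  using card_edge[of "{x, y, z}"]
  by (cases "x = y"; cases "x = z"; cases "y = z") (auto simp: card_insert_if)

lemma edge_through:
  assumes "f \<in> E" "v \<in> f"
  obtains y z where "f = {v, y, z}" "distinct [v, y, z]"
proof -
  obtain p q r where "f = {p, q, r}" "distinct [p, q, r]"
    using card_edge[OF assms(1)] by (auto simp: card_3_iff)
  with assms(2) that show ?thesis
    by (auto simp: insert_commute)
qed

lemma edges_at_disjoint:
  assumes "{u, v, w} \<in> E" "{u, v', w'} \<in> E" "{u, v, w} \<noteq> {u, v', w'}"
  shows "{v, w} \<inter> {v', w'} = {}"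
  using edge_eqI[OF assms(1,2), of u] edge_distinct[OF assms(1)] edge_distinct[OF assms(2)] assms(3)
  by auto

lemma edge_third_vertex:
  assumes "{u, v, w} \<in> E" "{u, v, w'} \<in> E"
  shows "w' = w"
proof -
  have "{u, v, w} = {u, v, w'}"
    using edge_eqI[OF assms, of u v] edge_distinct[OF assms(1)] by simp
  then show ?thesis
    using edge_distinct[OF assms(2)] by auto
qed

lemma edges_at_avoid:
  assumes "{u, v, w} \<in> E" "{u, v', w'} \<in> E" "v \<notin> {v', w'}"
  shows "w \<notin> {v', w'}"
proof -
  have "{u, v, w} \<noteq> {u, v', w'}"
    using assms(3) edge_distinct[OF assms(1)] by auto
  then show ?thesis
    using edges_at_disjoint[OF assms(1,2)] by blast
qed

lemma edge_through_pair:
  assumes "f \<in> E" "u \<in> f" "v \<in> f" "u \<noteq> v"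
  obtains w where "f = {u, v, w}"
proof -
  obtain y z where "f = {u, y, z}" "distinct [u, y, z]"
    using assms(1,2) by (elim edge_through)
  with assms(3,4) that show ?thesis
    by (auto simp: insert_commute)
qed

lemma neighboursI: "e \<in> E \<Longrightarrow> v \<in> e \<Longrightarrow> u \<in> e \<Longrightarrow> u \<noteq> v \<Longrightarrow> u \<in> neighbours E v"
  unfolding neighbours_def by blast

lemma card_neighbours: "card (neighbours E v) = 2 * degree E v"
proof -
  have "neighbours E v = (\<Union>e\<in>{e \<in> E. v \<in> e}. e - {v})"
    unfolding neighbours_def by blast
  also have "card \<dots> = (\<Sum>e\<in>{e \<in> E. v \<in> e}. card (e - {v}))"
  proof (rule card_UN_disjoint)
    show "\<forall>e\<in>{e \<in> E. v \<in> e}. \<forall>e'\<in>{e \<in> E. v \<in> e}. e \<noteq> e' \<longrightarrow> (e - {v}) \<inter> (e' - {v}) = {}"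
      using edge_eqI by blast
  qed (use finite_E finite_edge in auto)
  also have "\<dots> = (\<Sum>e\<in>{e \<in> E. v \<in> e}. 2)"
    using card_edge by (intro sum.cong) auto
  finally show ?thesis
    unfolding degree_def by simp
qed

lemma neighbours_eqI:
  assumes "X \<subseteq> neighbours E v" "2 * degree E v \<le> card X"
  shows "neighbours E v = X"
proof -
  have "finite (neighbours E v)"
    using finite_V edge_subset unfolding neighbours_def by (blast intro: finite_subset)
  with assms show ?thesis
    using card_seteq card_neighbours by metis
qed

lemma degree_pos: "e \<in> E \<Longrightarrow> v \<in> e \<Longrightarrow> 0 < degree E v"
  unfolding degree_def using finite_E by (auto simp: card_gt_0_iff)

lemma card_edges_through_pair: "u \<noteq> v \<Longrightarrow> card {e \<in> E. u \<in> e \<and> v \<in> e} \<le> 1"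
  using edge_eqI by (auto simp: card_le_Suc0_iff_eq[OF finite_subset[OF _ finite_E]])

lemma card_edges_meeting:
  assumes "finite X" "v \<notin> X"
  shows "card {e \<in> E. v \<in> e \<and> e \<inter> X \<noteq> {}} \<le> card X"
proof -
  have "{e \<in> E. v \<in> e \<and> e \<inter> X \<noteq> {}} = (\<Union>x\<in>X. {e \<in> E. v \<in> e \<and> x \<in> e})"
    by blast
  also have "card \<dots> \<le> (\<Sum>x\<in>X. card {e \<in> E. v \<in> e \<and> x \<in> e})"
    using assms(1) by (rule card_UN_le)
  also have "\<dots> \<le> (\<Sum>x\<in>X. 1)"
    using assms(2) by (intro sum_mono card_edges_through_pair) auto
  finally show ?thesis
    by simp
qed

lemma edge_avoiding:
  assumes "finite X" "v \<notin> X" "card X < degree E v"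
  obtains y z where "{v, y, z} \<in> E" "distinct [v, y, z]" "y \<notin> X" "z \<notin> X"
proof -
  have "{e \<in> E. v \<in> e \<and> e \<inter> X \<noteq> {}} \<noteq> {e \<in> E. v \<in> e}"
    using card_edges_meeting[OF assms(1,2)] assms(3) unfolding degree_def by force
  then obtain f where f: "f \<in> E" "v \<in> f" "f \<inter> X = {}"
    by blast
  then obtain y z where "f = {v, y, z}" "distinct [v, y, z]"
    by (elim edge_through)
  with f show ?thesis
    using that by auto
qed

lemma edge_avoiding_list:
  assumes "v \<notin> set xs" "length xs < degree E v"
  obtains y z where "{v, y, z} \<in> E" "distinct [v, y, z]" "y \<notin> set xs" "z \<notin> set xs"
  using edge_avoiding[of "set xs" v] assms card_length[of xs] by auto

lemma double_counting:
  "(\<Sum>e\<in>E. \<Sum>v\<in>e - S. f v e) = (\<Sum>v\<in>V - S. \<Sum>e\<in>{e \<in> E. v \<in> e}. f v e)"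
proof -
  have "(\<Sum>e\<in>E. \<Sum>v\<in>e - S. f v e) = (\<Sum>e\<in>E. \<Sum>v\<in>{v \<in> V - S. v \<in> e}. f v e)"
    using edge_subset by (intro sum.cong) auto
  also have "\<dots> = (\<Sum>v\<in>V - S. \<Sum>e\<in>{e \<in> E. v \<in> e}. f v e)"
    using finite_E finite_V by (intro sum.swap_restrict) auto
  finally show ?thesis .
qed

end

section \<open>Crowns\<close>

locale crown_free_lin3graph = lin3graph +
  assumes crown_free: "crown_free E"
begin

lemma no_crown:
  assumes "{a, b, c} \<in> E" "{a, d, e} \<in> E" "{b, f, g} \<in> E" "{c, h, i} \<in> E"
    and "distinct [a, b, c, d, e, f, g, h, i]"
  shows False
  using assms crown_free unfolding crown_free_def has_crown_def by blast

lemma no_edge_2_4_6: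
  assumes abc: "{a, b, c} \<in> E"
    and "2 \<le> degree E a" "4 \<le> degree E b" "6 \<le> degree E c"
  shows False
proof -
  have bca: "{b, c, a} \<in> E" "{c, a, b} \<in> E"
    using abc by (simp_all add: insert_commute)
  note abc_distinct = edge_distinct[OF abc]
  obtain d d' where A: "{a, d, d'} \<in> E" "distinct [a, d, d']" "d \<notin> {b}" "d' \<notin> {b}"
    using edge_avoiding_list[of a "[b]"] assms(2) abc_distinct by auto
  have "c \<notin> {d, d'}"
    using edges_at_avoid[OF abc A(1)] A by auto
  obtain f g where B: "{b, f, g} \<in> E" "distinct [b, f, g]" "f \<notin> {c, d, d'}" "g \<notin> {c, d, d'}"
    using edge_avoiding_list[of b "[c, d, d']"] assms(3) abc_distinct A by auto
  have "a \<notin> {f, g}"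
    using edges_at_avoid[OF bca(1) B(1)] B by auto
  obtain h i where C: "{c, h, i} \<in> E" "distinct [c, h, i]" "h \<notin> {a, d, d', f, g}" "i \<notin> {a, d, d', f, g}"
    using edge_avoiding_list[of c "[a, d, d', f, g]"] assms(4) abc_distinct A B \<open>c \<notin> {d, d'}\<close> by auto
  have "b \<notin> {h, i}"
    using edges_at_avoid[OF bca(2) C(1)] C by auto
  show False
    using no_crown[OF abc A(1) B(1) C(1)] abc_distinct A B C \<open>c \<notin> {d, d'}\<close> \<open>a \<notin> {f, g}\<close> \<open>b \<notin> {h, i}\<close>
    by auto
qed

text \<open>Otherwise edges at \<open>y\<close> and at \<open>x\<close> can be chosen disjoint from \<open>zpq\<close> and from each
  other, and together with \<open>zpq\<close> they form a crown with centre \<open>xyz\<close>.\<close>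

lemma neighbour_of_third_joins_first:
  assumes xyz: "{x, y, z} \<in> E" and "5 \<le> degree E x" "4 \<le> degree E y"
    and zpq: "{z, p, q} \<in> E" "{z, p, q} \<noteq> {x, y, z}"
  shows "\<exists>w. {x, p, w} \<in> E"
proof (rule ccontr)
  assume no_edge: "\<nexists>w. {x, p, w} \<in> E"
  have zxy: "{z, x, y} \<in> E" "{y, x, z} \<in> E"
    using xyz by (simp_all add: insert_commute)
  note xyz_distinct = edge_distinct[OF xyz] and zpq_distinct = edge_distinct[OF zpq(1)]
  have "{z, p, q} \<noteq> {z, x, y}"
    using zpq(2) by (simp add: insert_commute)
  then have pq: "{p, q} \<inter> {x, y} = {}"
    using edges_at_disjoint[OF zpq(1) zxy(1)] by blast
  obtain r s where B: "{y, r, s} \<in> E" "distinct [y, r, s]" "r \<notin> {x, p, q}" "s \<notin> {x, p, q}"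
    using edge_avoiding_list[of y "[x, p, q]"] assms(3) xyz_distinct pq by auto
  have "z \<notin> {r, s}"
    using edges_at_avoid[OF zxy(2) B(1)] B by auto
  obtain d d' where A: "{x, d, d'} \<in> E" "distinct [x, d, d']" "d \<notin> {y, q, r, s}" "d' \<notin> {y, q, r, s}"
    using edge_avoiding_list[of x "[y, q, r, s]"] assms(2) xyz_distinct pq B by auto
  have "z \<notin> {d, d'}"
    using edges_at_avoid[OF xyz A(1)] A by auto
  moreover have "p \<notin> {d, d'}"
  proof
    assume "p \<in> {d, d'}"
    then have "{x, p, d'} \<in> E \<or> {x, p, d} \<in> E"
      using A(1) by (auto simp: insert_commute)
    with no_edge show False
      by blast
  qed
  ultimately show False
    using no_crown[OF xyz A(1) B(1) zpq(1)] xyz_distinct zpq_distinct pq A B \<open>z \<notin> {r, s}\<close>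
    by auto
qed

end

section \<open>The neighbourhood of a heavy edge\<close>

lemma card_Diff_le_1_mem:
  assumes "card (A - B) \<le> 1" "X \<in> A" "Y \<in> A" "X \<noteq> Y" "X \<notin> B" "finite A"
  shows "Y \<in> B"
proof (rule ccontr)
  assume "Y \<notin> B"
  then have "card {X, Y} \<le> card (A - B)"
    using assms by (intro card_mono) auto
  with assms(1,4) show False
    by simp
qed

locale double_square = crown_free_lin3graph +
  fixes a b c v1 v2 v3 v4 v5 v6 v7 v8 :: 'a
  assumes vertices_distinct: "distinct [a, b, c, v1, v2, v3, v4, v5, v6, v7, v8]"
    and a_edges: "{a, v1, v2} \<in> E" "{a, v3, v4} \<in> E" "{a, v5, v6} \<in> E" "{a, v7, v8} \<in> E"
    and b_edges: "{b, v2, v3} \<in> E" "{b, v4, v1} \<in> E" "{b, v6, v7} \<in> E" "{b, v8, v5} \<in> E"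

locale heavy_configuration = double_square +
  assumes c_edges: "\<And>f. f \<in> E \<Longrightarrow> c \<in> f \<Longrightarrow>
      f = {a, b, c} \<or> f \<in> {{c, v1, v3}, {c, v2, v4}, {c, v5, v7}, {c, v6, v8}}"
    and missing_diagonal: "card ({{c, v1, v3}, {c, v2, v4}, {c, v5, v7}, {c, v6, v8}} - E) \<le> 1"
begin

abbreviation diagonals :: "'a set set" where
  "diagonals \<equiv> {{c, v1, v3}, {c, v2, v4}, {c, v5, v7}, {c, v6, v8}}"

lemma diagonal_present:
  assumes "X \<in> diagonals" "Y \<in> diagonals" "X \<noteq> Y" "X \<notin> E"
  shows "Y \<in> E"
  using missing_diagonal assms by (rule card_Diff_le_1_mem) simp

lemma chord_v1_v3:
  assumes chord: "{v1, v3, x} \<in> E"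
  shows "x = c"
proof (rule ccontr)
  assume "x \<noteq> c"
  have "{v1, a, v2} \<in> E" "{v1, b, v4} \<in> E"
    using a_edges(1) b_edges(2) by (simp_all add: insert_commute)
  then have x: "x \<notin> {a, v2}" "x \<notin> {b, v4}"
    using edges_at_avoid[OF chord] vertices_distinct by auto
  have "{v1, v3, c} \<notin> E"
    using edge_third_vertex[OF _ chord, of c] \<open>x \<noteq> c\<close> by blast
  then have "{c, v1, v3} \<notin> E"
    by (simp add: insert_commute)
  moreover have "v1 \<notin> {c, v2, v4}"
    using vertices_distinct by auto
  then have "{c, v1, v3} \<noteq> {c, v2, v4}"
    by blast
  ultimately have "{c, v2, v4} \<in> E"
    by (intro diagonal_present[of "{c, v1, v3}"]) simp_all
  then have c24: "{v2, c, v4} \<in> E"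
    by (simp add: insert_commute)
  show False
  proof (cases "x \<in> {v5, v6}")
    case True
    then show False
      using no_crown[OF a_edges(1) a_edges(4) chord c24] x vertices_distinct \<open>x \<noteq> c\<close> edge_distinct[OF chord]
      by auto
  next
    case False
    then show False
      using no_crown[OF a_edges(1) a_edges(3) chord c24] x vertices_distinct \<open>x \<noteq> c\<close> edge_distinct[OF chord]
      by auto
  qed
qed

lemma no_edge_v1_on_diagonal:
  assumes "{v1, p, q} \<in> E" "{c, p, q} \<in> diagonals" "{c, p', q'} \<in> diagonals"
    and "distinct [v1, c, v3, p, q, p', q', a, v4]"
  shows False
proof -
  have "{p, q, v1} \<in> E"
    using assms(1) by (simp add: insert_commute)
  then have "{p, q, c} \<notin> E"
    using edge_third_vertex[of p q c v1] assms(4) by auto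
  then have "{c, p, q} \<notin> E"
    by (simp add: insert_commute)
  moreover have "v1 \<notin> {c, p, q}" "p \<notin> {c, p', q'}"
    using assms(4) by auto
  then have "{c, p, q} \<noteq> {c, v1, v3}" "{c, p, q} \<noteq> {c, p', q'}"
    by blast+
  ultimately have "{v1, c, v3} \<in> E" "{c, p', q'} \<in> E"
    using diagonal_present[OF assms(2)] assms(3) by (simp_all add: insert_commute)
  moreover have "{v3, a, v4} \<in> E"
    using a_edges(2) by (simp add: insert_commute)
  ultimately show False
    using no_crown[of v1 c v3 p q p' q' a v4] assms(1,4) by blast
qed

lemma transversal_v1:
  assumes transversal: "{v1, p, q} \<in> E" and "p \<in> {v5, v6}" "q \<in> {v7, v8}"
  shows False
proof -
  have "\<not> (p = v6 \<and> q = v7)" "\<not> (p = v5 \<and> q = v8)"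
    using edge_eqI[OF transversal b_edges(3), of v6 v7] edge_eqI[OF transversal b_edges(4), of v5 v8]
      vertices_distinct by auto
  with assms(2,3) consider "p = v5" "q = v7" | "p = v6" "q = v8"
    by blast
  then show False
  proof cases
    case 1
    show False
      by (rule no_edge_v1_on_diagonal[of p q v6 v8]) (use 1 transversal vertices_distinct in auto)
  next
    case 2
    show False
      by (rule no_edge_v1_on_diagonal[of p q v5 v7]) (use 2 transversal vertices_distinct in auto)
  qed
qed

lemma edge_at_v1_meets_square:
  assumes f: "{v1, u, w} \<in> E" "{u, w} \<inter> {a, b, c, v2, v3, v4} = {}"
  shows False
proof -
  have b23: "{v2, b, v3} \<in> E"
    using b_edges(1) by (simp add: insert_commute)
  have "{u, w} \<inter> {v5, v6} \<noteq> {}"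
    using no_crown[OF a_edges(1) a_edges(3) f(1) b23] f(2) edge_distinct[OF f(1)] vertices_distinct by auto
  moreover have "{u, w} \<inter> {v7, v8} \<noteq> {}"
    using no_crown[OF a_edges(1) a_edges(4) f(1) b23] f(2) edge_distinct[OF f(1)] vertices_distinct by auto
  ultimately consider "u \<in> {v5, v6}" "w \<in> {v7, v8}" | "w \<in> {v5, v6}" "u \<in> {v7, v8}"
    using vertices_distinct by auto
  then show False
  proof cases
    case 1
    then show False
      using transversal_v1[OF f(1)] by blast
  next
    case 2
    moreover have "{v1, w, u} \<in> E"
      using f(1) by (simp add: insert_commute)
    ultimately show False
      using transversal_v1 by blast
  qed
qed

lemma degree_v1_le_3: "degree E v1 \<le> 3"
proof (rule ccontr)
  assume "\<not> degree E v1 \<le> 3"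
  then have "\<not> {f \<in> E. v1 \<in> f} \<subseteq> {{a, v1, v2}, {b, v4, v1}, {c, v1, v3}}"
    using card_mono[of "{{a, v1, v2}, {b, v4, v1}, {c, v1, v3}}" "{f \<in> E. v1 \<in> f}"]
      card_length[of "[{a, v1, v2}, {b, v4, v1}, {c, v1, v3}]"] unfolding degree_def by fastforce
  then obtain f where f: "f \<in> E" "v1 \<in> f" "f \<noteq> {a, v1, v2}" "f \<noteq> {b, v4, v1}" "f \<noteq> {c, v1, v3}"
    by blast
  have "a \<notin> f" "v2 \<notin> f"
    using edge_eqI[OF f(1) a_edges(1), of v1] f vertices_distinct by auto
  moreover have "b \<notin> f" "v4 \<notin> f"
    using edge_eqI[OF f(1) b_edges(2), of v1] f vertices_distinct by auto
  moreover have "c \<notin> f"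
    using c_edges[OF f(1)] f vertices_distinct by auto
  moreover obtain u w where "f = {v1, u, w}"
    using f(1,2) by (elim edge_through)
  ultimately show False
    using chord_v1_v3[of w] chord_v1_v3[of u] edge_at_v1_meets_square[of u w] f(1)
    by (cases "v3 \<in> {u, w}") (auto simp: insert_commute)
qed

lemma rotate: "heavy_configuration V E b a c v2 v3 v4 v1 v6 v7 v8 v5"
proof -
  have "{{c, v2, v4}, {c, v3, v1}, {c, v6, v8}, {c, v7, v5}} = diagonals"
    by (simp add: insert_commute)
  moreover have "{b, a, c} = {a, b, c}"
    by (simp add: insert_commute)
  moreover have "distinct [b, a, c, v2, v3, v4, v1, v6, v7, v8, v5]"
    using vertices_distinct by auto
  ultimately show ?thesis
    using linear crown_free a_edges b_edges c_edges missing_diagonal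
    by unfold_locales (simp_all add: insert_commute)
qed

lemma swap: "heavy_configuration V E a b c v5 v6 v7 v8 v1 v2 v3 v4"
proof -
  have "{{c, v5, v7}, {c, v6, v8}, {c, v1, v3}, {c, v2, v4}} = diagonals"
    by (simp add: insert_commute)
  moreover have "distinct [a, b, c, v5, v6, v7, v8, v1, v2, v3, v4]"
    using vertices_distinct by auto
  ultimately show ?thesis
    using linear crown_free a_edges b_edges c_edges missing_diagonal
    by unfold_locales simp_all
qed

lemma degree_le_3:
  assumes "v \<in> {v1, v2, v3, v4, v5, v6, v7, v8}"
  shows "degree E v \<le> 3"
proof -
  note r1 = rotate and s0 = swap
  note r2 = heavy_configuration.rotate[OF r1] and s1 = heavy_configuration.rotate[OF s0]
  note r3 = heavy_configuration.rotate[OF r2] and s2 = heavy_configuration.rotate[OF s1]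
  note s3 = heavy_configuration.rotate[OF s2]
  show ?thesis
    using assms degree_v1_le_3 heavy_configuration.degree_v1_le_3[OF r1]
      heavy_configuration.degree_v1_le_3[OF r2] heavy_configuration.degree_v1_le_3[OF r3]
      heavy_configuration.degree_v1_le_3[OF s0] heavy_configuration.degree_v1_le_3[OF s1]
      heavy_configuration.degree_v1_le_3[OF s2] heavy_configuration.degree_v1_le_3[OF s3]
    by auto
qed

end

locale heavy_edge = crown_free_lin3graph +
  fixes a b c :: 'a
  assumes edge: "{a, b, c} \<in> E"
    and degree_a: "degree E a = 5" and degree_b: "degree E b = 5" and degree_c: "4 \<le> degree E c"
begin

lemma edge_permutations: "{a, c, b} \<in> E" "{b, a, c} \<in> E" "{b, c, a} \<in> E" "{c, a, b} \<in> E"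
  using edge by (simp_all add: insert_commute)

lemmas abc_distinct = edge_distinct[OF edge]

text \<open>Otherwise the edge at \<open>a\<close> through \<open>t\<close>, an edge at \<open>b\<close> avoiding it, and \<open>cpq\<close> form a
  crown with centre \<open>abc\<close>.\<close>

lemma b_edge_crosses:
  assumes cpq: "{c, p, q} \<in> E" "{c, p, q} \<noteq> {a, b, c}"
    and aq: "{a, q, q'} \<in> E" and bp: "{b, p, t} \<in> E"
  shows "t = q'"
proof (rule ccontr)
  assume "t \<noteq> q'"
  note cpq_distinct = edge_distinct[OF cpq(1)]
  have "{c, p, q} \<noteq> {c, a, b}"
    using cpq(2) by (simp add: insert_commute)
  then have pq: "{p, q} \<inter> {a, b} = {}"
    using edges_at_disjoint[OF cpq(1) edge_permutations(4)] by blast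
  obtain p' where ap: "{a, p, p'} \<in> E"
    using neighbour_of_third_joins_first[OF edge _ _ cpq] degree_a degree_b by auto
  have p': "p' \<notin> {b, c}"
    using edges_at_avoid[OF ap edge] pq cpq_distinct by auto
  have perms: "{p, b, t} \<in> E" "{p, c, q} \<in> E" "{p, a, p'} \<in> E" "{b, t, p} \<in> E"
    using bp cpq(1) ap by (simp_all add: insert_commute)
  have t: "t \<notin> {c, a}" "t \<notin> {c, q}" "t \<notin> {a, p'}"
    using edges_at_avoid[OF bp edge_permutations(3)] edges_at_avoid[OF perms(1,2)]
      edges_at_avoid[OF perms(1,3)] pq cpq_distinct abc_distinct p' by auto
  have "p \<notin> {a, c, b}"
    using pq cpq_distinct by auto
  then have "{b, t, p} \<noteq> {a, c, b}"
    by blast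
  then obtain t' where at: "{a, t, t'} \<in> E"
    using neighbour_of_third_joins_first[OF edge_permutations(1) _ _ perms(4)] degree_a degree_c
    by auto
  have t': "t' \<notin> {b, c}" "t' \<notin> {p, p'}" "t' \<notin> {q, q'}"
    using edges_at_avoid[OF at edge] edges_at_avoid[OF at ap] edges_at_avoid[OF at aq]
      t \<open>t \<noteq> q'\<close> edge_distinct[OF bp] by auto
  obtain f h where B: "{b, f, h} \<in> E" "distinct [b, f, h]" "f \<notin> {a, t', p, q}" "h \<notin> {a, t', p, q}"
    using edge_avoiding_list[of b "[a, t', p, q]"] degree_b abc_distinct t' pq by auto
  have "c \<notin> {f, h}" "t \<notin> {f, h}"
    using edges_at_avoid[OF edge_permutations(2) B(1)] edges_at_avoid[OF bp B(1)] B by auto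
  then show False
    using no_crown[OF edge at B(1) cpq(1)] abc_distinct cpq_distinct pq t t' B
      edge_distinct[OF at] edge_distinct[OF bp] by auto
qed

lemma c_edge_square:
  assumes crs: "{c, r, s} \<in> E" "{c, r, s} \<noteq> {a, b, c}"
  obtains r' s' where "{a, r, r'} \<in> E" "{a, s, s'} \<in> E" "{b, r', s} \<in> E" "{b, s', r} \<in> E"
    "distinct [a, b, c, r, r', s, s']"
proof -
  have csr: "{c, s, r} \<in> E" "{c, s, r} \<noteq> {a, b, c}" "{c, r, s} \<noteq> {b, a, c}" "{c, s, r} \<noteq> {b, a, c}"
    using crs by (simp_all add: insert_commute)
  obtain r' s' where ar: "{a, r, r'} \<in> E" and as: "{a, s, s'} \<in> E"
    using neighbour_of_third_joins_first[OF edge _ _ crs] neighbour_of_third_joins_first[OF edge _ _ csr(1,2)]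
      degree_a degree_b by auto
  obtain t u where "{b, r, t} \<in> E" "{b, s, u} \<in> E"
    using neighbour_of_third_joins_first[OF edge_permutations(2) _ _ crs(1) csr(3)]
      neighbour_of_third_joins_first[OF edge_permutations(2) _ _ csr(1) csr(4)] degree_a degree_b by auto
  moreover have "t = s'" if "{b, r, t} \<in> E"
    using b_edge_crosses[OF crs as that] .
  moreover have "u = r'" if "{b, s, u} \<in> E"
    using b_edge_crosses[OF csr(1,2) ar that] .
  ultimately have br: "{b, r', s} \<in> E" "{b, s', r} \<in> E"
    by (simp_all add: insert_commute)
  have "{c, r, s} \<noteq> {c, a, b}"
    using crs(2) by (simp add: insert_commute)
  then have rs: "{r, s} \<inter> {a, b} = {}"
    using edges_at_disjoint[OF crs(1) edge_permutations(4)] by blast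
  have r's': "r' \<notin> {b, c}" "s' \<notin> {b, c}"
    using edges_at_avoid[OF ar edge] edges_at_avoid[OF as edge] rs edge_distinct[OF crs(1)] by auto
  have "{r, c, s} \<in> E" "{r, a, r'} \<in> E" "{s, c, r} \<in> E" "{s, a, s'} \<in> E"
    using crs(1) ar as by (simp_all add: insert_commute)
  then have "s \<notin> {a, r'}" "r \<notin> {a, s'}"
    using edges_at_avoid[of r c s a r'] edges_at_avoid[of s c r a s'] abc_distinct r's' by auto
  moreover have "r' \<notin> {s, s'}"
    using edges_at_avoid[OF ar as] calculation(2) edge_distinct[OF crs(1)] by auto
  moreover note r's'
  ultimately have "distinct [a, b, c, r, r', s, s']"
    using rs abc_distinct edge_distinct[OF crs(1)] edge_distinct[OF ar] edge_distinct[OF as] by auto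
  with ar as br that show ?thesis
    by blast
qed

lemma c_edge_opposite:
  assumes "{a, r, r'} \<in> E" "{b, s', r} \<in> E" "r' \<notin> {a, b, c}" and cry: "{c, r', y} \<in> E"
  shows "y = s'"
proof -
  have "{c, r', y} \<noteq> {a, b, c}"
    using assms(3) by blast
  then obtain r'' where "{a, r', r''} \<in> E" "{b, r'', y} \<in> E"
    using cry by (elim c_edge_square)
  moreover have "{a, r', r} \<in> E" "{b, r, s'} \<in> E"
    using assms(1,2) by (simp_all add: insert_commute)
  ultimately show ?thesis
    using edge_third_vertex[of a r' r'' r] edge_third_vertex[of b r s' y] by auto
qed

lemma c_edges_meeting_square:
  assumes "{a, r, r'} \<in> E" "{a, s, s'} \<in> E" "{b, r', s} \<in> E" "{b, s', r} \<in> E"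
    and "{c, r, s} \<in> E" "distinct [a, b, c, r, r', s, s']"
    and f: "f \<in> E" "c \<in> f" "x \<in> f" "x \<in> {r, s, r', s'}"
  shows "f = {c, r, s} \<or> f = {c, r', s'}"
proof -
  have "c \<noteq> x"
    using f(4) assms(6) by auto
  then obtain y where fxy: "f = {c, x, y}"
    using edge_through_pair[OF f(1,2,3)] by blast
  then have cxy: "{c, x, y} \<in> E"
    using f(1) by simp
  consider "x = r" | "x = s" | "x = r'" | "x = s'"
    using f(4) by blast
  then show ?thesis
  proof cases
    case 1
    then show ?thesis
      using edge_third_vertex[of c r s y] assms(5) cxy fxy by simp
  next
    case 2
    have "{c, s, r} \<in> E"
      using assms(5) by (simp add: insert_commute)
    then have "y = r"
      using edge_third_vertex[of c s r y] cxy 2 by simp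
    then show ?thesis
      using fxy 2 by (simp add: insert_commute)
  next
    case 3
    then show ?thesis
      using c_edge_opposite[OF assms(1,4) _ cxy[unfolded 3]] assms(6) fxy by auto
  next
    case 4
    then have "y = r'"
      using c_edge_opposite[OF assms(2,3) _ cxy[unfolded 4]] assms(6) by auto
    then show ?thesis
      using fxy 4 by (simp add: insert_commute)
  qed
qed

lemma first_square:
  obtains v1 v2 v3 v4 where "{c, v1, v3} \<in> E" "{a, v1, v2} \<in> E" "{a, v3, v4} \<in> E"
    "{b, v2, v3} \<in> E" "{b, v4, v1} \<in> E" "distinct [a, b, c, v1, v2, v3, v4]"
proof -
  obtain r s where crs: "{c, r, s} \<in> E" "distinct [c, r, s]" "r \<notin> {a}" "s \<notin> {a}"
    using edge_avoiding_list[of c "[a]"] degree_c abc_distinct by auto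
  then have "a \<notin> {c, r, s}"
    using abc_distinct by auto
  then have "{c, r, s} \<noteq> {a, b, c}"
    by blast
  then obtain r' s' where "{a, r, r'} \<in> E" "{a, s, s'} \<in> E" "{b, r', s} \<in> E" "{b, s', r} \<in> E"
    "distinct [a, b, c, r, r', s, s']"
    using c_edge_square[OF crs(1)] by blast
  then show ?thesis
    using that[OF crs(1)] by blast
qed

lemma second_square:
  assumes "{c, v1, v3} \<in> E" "{a, v1, v2} \<in> E" "{a, v3, v4} \<in> E" "{b, v2, v3} \<in> E" "{b, v4, v1} \<in> E"
    and "distinct [a, b, c, v1, v2, v3, v4]"
  obtains v5 v6 v7 v8 where "{c, v5, v7} \<in> E" "{a, v5, v6} \<in> E" "{a, v7, v8} \<in> E"
    "{b, v6, v7} \<in> E" "{b, v8, v5} \<in> E" "distinct [a, b, c, v1, v2, v3, v4, v5, v6, v7, v8]"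
proof -
  have "\<exists>f\<in>E. c \<in> f \<and> f \<noteq> {a, b, c} \<and> f \<inter> {v1, v2, v3, v4} = {}"
  proof (rule ccontr)
    assume no_edge: "\<not> ?thesis"
    have "f \<in> {{a, b, c}, {c, v1, v3}, {c, v2, v4}}" if "f \<in> E" "c \<in> f" for f
    proof (cases "f = {a, b, c}")
      case False
      with that no_edge obtain x where "x \<in> f" "x \<in> {v1, v3, v2, v4}"
        by blast
      then show ?thesis
        using c_edges_meeting_square[OF assms(2,3,4,5,1,6) that] by blast
    qed simp
    then have "degree E c \<le> card {{a, b, c}, {c, v1, v3}, {c, v2, v4}}"
      unfolding degree_def by (intro card_mono) auto
    also have "\<dots> \<le> 3"
      using card_length[of "[{a, b, c}, {c, v1, v3}, {c, v2, v4}]"] by simp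
    finally show False
      using degree_c by simp
  qed
  then obtain f where f: "f \<in> E" "c \<in> f" "f \<noteq> {a, b, c}" "f \<inter> {v1, v2, v3, v4} = {}"
    by blast
  then obtain v5 v7 where f_eq: "f = {c, v5, v7}"
    by (elim edge_through)
  then obtain v6 v8 where sq: "{a, v5, v6} \<in> E" "{a, v7, v8} \<in> E" "{b, v6, v7} \<in> E"
    "{b, v8, v5} \<in> E" "distinct [a, b, c, v5, v6, v7, v8]"
    using c_edge_square[of v5 v7] f(1,3) by blast
  have "v6 \<notin> {v1, v2}" "v6 \<notin> {v3, v4}" "v8 \<notin> {v1, v2}" "v8 \<notin> {v3, v4}"
    using edges_at_avoid[OF sq(1) assms(2)] edges_at_avoid[OF sq(1) assms(3)]
      edges_at_avoid[OF sq(2) assms(2)] edges_at_avoid[OF sq(2) assms(3)] f(4) f_eq by auto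
  then have "distinct [a, b, c, v1, v2, v3, v4, v5, v6, v7, v8]"
    using assms(6) sq(5) f(4) f_eq by auto
  then show ?thesis
    using that f(1) sq f_eq by blast
qed

end

locale heavy_edge_squares = heavy_edge + double_square V E a b c v1 v2 v3 v4 v5 v6 v7 v8
    for v1 v2 v3 v4 v5 v6 v7 v8 +
  assumes c_edges_given: "{c, v1, v3} \<in> E" "{c, v5, v7} \<in> E"
begin

lemma neighbours_a: "neighbours E a = {b, c, v1, v2, v3, v4, v5, v6, v7, v8}"
proof (rule neighbours_eqI)
  show "{b, c, v1, v2, v3, v4, v5, v6, v7, v8} \<subseteq> neighbours E a"
    using neighboursI[OF edge, of a] neighboursI[OF a_edges(1), of a] neighboursI[OF a_edges(2), of a]
      neighboursI[OF a_edges(3), of a] neighboursI[OF a_edges(4), of a] vertices_distinct by auto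
  show "2 * degree E a \<le> card {b, c, v1, v2, v3, v4, v5, v6, v7, v8}"
    using distinct_card[of "[b, c, v1, v2, v3, v4, v5, v6, v7, v8]"] vertices_distinct degree_a by simp
qed

lemma neighbours_b: "neighbours E b = {a, c, v1, v2, v3, v4, v5, v6, v7, v8}"
proof (rule neighbours_eqI)
  show "{a, c, v1, v2, v3, v4, v5, v6, v7, v8} \<subseteq> neighbours E b"
    using neighboursI[OF edge, of b] neighboursI[OF b_edges(1), of b] neighboursI[OF b_edges(2), of b]
      neighboursI[OF b_edges(3), of b] neighboursI[OF b_edges(4), of b] vertices_distinct by auto
  show "2 * degree E b \<le> card {a, c, v1, v2, v3, v4, v5, v6, v7, v8}"
    using distinct_card[of "[a, c, v1, v2, v3, v4, v5, v6, v7, v8]"] vertices_distinct degree_b by simp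
qed

lemma c_edges:
  assumes f: "f \<in> E" "c \<in> f"
  shows "f = {a, b, c} \<or> f \<in> {{c, v1, v3}, {c, v2, v4}, {c, v5, v7}, {c, v6, v8}}"
proof (cases "f = {a, b, c}")
  case False
  obtain y z where f_eq: "f = {c, y, z}"
    using f by (elim edge_through)
  then obtain y' z' where "{a, y, y'} \<in> E" "distinct [a, b, c, y, y', z, z']"
    using c_edge_square[of y z] f(1) False by blast
  then have "y \<in> neighbours E a" "y \<noteq> b" "y \<noteq> c"
    using neighboursI[of "{a, y, y'}" a y] by auto
  then consider "y \<in> {v1, v3, v2, v4}" | "y \<in> {v5, v7, v6, v8}"
    unfolding neighbours_a by blast
  then show ?thesis
  proof cases
    case 1
    have "distinct [a, b, c, v1, v2, v3, v4]"
      using vertices_distinct by simp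
    then have "f = {c, v1, v3} \<or> f = {c, v2, v4}"
      using c_edges_meeting_square[OF a_edges(1,2) b_edges(1,2) c_edges_given(1) _ f, where x = y] 1 f_eq
      by blast
    then show ?thesis
      by blast
  next
    case 2
    have "distinct [a, b, c, v5, v6, v7, v8]"
      using vertices_distinct by simp
    then have "f = {c, v5, v7} \<or> f = {c, v6, v8}"
      using c_edges_meeting_square[OF a_edges(3,4) b_edges(3,4) c_edges_given(2) _ f, where x = y] 2 f_eq
      by blast
    then show ?thesis
      by blast
  qed
qed simp

lemma missing_diagonal: "card ({{c, v1, v3}, {c, v2, v4}, {c, v5, v7}, {c, v6, v8}} - E) \<le> 1"
proof -
  define D where "D = {{c, v1, v3}, {c, v2, v4}, {c, v5, v7}, {c, v6, v8}}"
  have "{e \<in> E. c \<in> e} \<subseteq> insert {a, b, c} (D \<inter> E)"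
    using c_edges[folded D_def] by blast
  then have "degree E c \<le> card (insert {a, b, c} (D \<inter> E))"
    unfolding degree_def D_def by (intro card_mono) auto
  also have "\<dots> \<le> Suc (card (D \<inter> E))"
    unfolding D_def by (simp add: card_insert_if)
  finally have "3 \<le> card (D \<inter> E)"
    using degree_c by simp
  moreover have "card D \<le> 4"
    unfolding D_def using card_length[of "[{c, v1, v3}, {c, v2, v4}, {c, v5, v7}, {c, v6, v8}]"] by simp
  moreover have "finite D"
    unfolding D_def by simp
  ultimately show ?thesis
    unfolding D_def[symmetric] by (simp add: card_Diff_subset_Int)
qed

lemma heavy_configuration: "heavy_configuration V E a b c v1 v2 v3 v4 v5 v6 v7 v8"
  using linear crown_free vertices_distinct a_edges b_edges c_edges missing_diagonal by unfold_locales

end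

context heavy_edge
begin

lemma heavy_edge_squares_exist:
  obtains v1 v2 v3 v4 v5 v6 v7 v8 where "heavy_edge_squares V E a b c v1 v2 v3 v4 v5 v6 v7 v8"
proof -
  obtain v1 v2 v3 v4 where sq1: "{c, v1, v3} \<in> E" "{a, v1, v2} \<in> E" "{a, v3, v4} \<in> E"
    "{b, v2, v3} \<in> E" "{b, v4, v1} \<in> E" "distinct [a, b, c, v1, v2, v3, v4]"
    by (rule first_square)
  then obtain v5 v6 v7 v8 where sq2: "{c, v5, v7} \<in> E" "{a, v5, v6} \<in> E" "{a, v7, v8} \<in> E"
    "{b, v6, v7} \<in> E" "{b, v8, v5} \<in> E" "distinct [a, b, c, v1, v2, v3, v4, v5, v6, v7, v8]"
    by (rule second_square)
  have "heavy_edge_squares V E a b c v1 v2 v3 v4 v5 v6 v7 v8"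
    using sq1 sq2 by unfold_locales
  then show ?thesis
    by (rule that)
qed

lemma neighbour_degree_le_3:
  assumes "v \<in> {a, b, c}" "w \<in> neighbours E v" "w \<notin> {a, b, c}"
  shows "degree E w \<le> 3"
proof -
  obtain v1 v2 v3 v4 v5 v6 v7 v8 where sq: "heavy_edge_squares V E a b c v1 v2 v3 v4 v5 v6 v7 v8"
    by (rule heavy_edge_squares_exist)
  consider "v = a" | "v = b" | "v = c"
    using assms(1) by blast
  then have "w \<in> {v1, v2, v3, v4, v5, v6, v7, v8}"
  proof cases
    case 1
    then have "w \<in> {b, c, v1, v2, v3, v4, v5, v6, v7, v8}"
      using assms(2) heavy_edge_squares.neighbours_a[OF sq] by simp
    with assms(3) show ?thesis
      by auto
  next
    case 2
    then have "w \<in> {a, c, v1, v2, v3, v4, v5, v6, v7, v8}"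
      using assms(2) heavy_edge_squares.neighbours_b[OF sq] by simp
    with assms(3) show ?thesis
      by auto
  next
    case 3
    then obtain f where f: "f \<in> E" "c \<in> f" "w \<in> f"
      using assms(2) unfolding neighbours_def by blast
    moreover have "f \<noteq> {a, b, c}"
      using f(3) assms(3) by blast
    ultimately have "f \<in> {{c, v1, v3}, {c, v2, v4}, {c, v5, v7}, {c, v6, v8}}"
      using heavy_edge_squares.c_edges[OF sq f(1,2)] by metis
    then show ?thesis
      using f(3) assms(3) by auto
  qed
  then show ?thesis
    by (rule heavy_configuration.degree_le_3[OF heavy_edge_squares.heavy_configuration[OF sq]])
qed

end

section \<open>Discharging\<close>

lemma sum_le_two_valued:
  fixes f :: "'b \<Rightarrow> real"
  assumes "finite A" "\<And>x. x \<in> A \<Longrightarrow> f x \<le> (if P x then \<alpha> else \<beta>)"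
    and "\<beta> \<le> \<alpha>" "real (card {x \<in> A. P x}) \<le> k"
  shows "sum f A \<le> \<beta> * card A + (\<alpha> - \<beta>) * k"
proof -
  have "f x \<le> \<beta> + (if P x then \<alpha> - \<beta> else 0)" if "x \<in> A" for x
    using assms(2)[OF that] by (simp split: if_splits)
  then have "sum f A \<le> (\<Sum>x\<in>A. \<beta> + (if P x then \<alpha> - \<beta> else 0))"
    by (rule sum_mono)
  also have "\<dots> = \<beta> * card A + (\<alpha> - \<beta>) * card {x \<in> A. P x}"
    using assms(1) by (simp add: sum.distrib sum.If_cases Int_def)
  also have "\<dots> \<le> \<beta> * card A + (\<alpha> - \<beta>) * k"
    using assms(3,4) by (simp add: mult_left_mono)
  finally show ?thesis .
qed

definition heavy :: "'a set set \<Rightarrow> 'a set \<Rightarrow> bool" where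
  "heavy E e \<longleftrightarrow> (\<exists>x y z. e = {x, y, z} \<and> distinct [x, y, z] \<and>
     degree E x = 5 \<and> degree E y = 5 \<and> degree E z \<in> {4, 5})"

definition touches_heavy :: "'a set set \<Rightarrow> 'a \<Rightarrow> bool" where
  "touches_heavy E v \<longleftrightarrow> (\<exists>e\<in>E. heavy E e \<and> v \<in> e)"

definition base_share :: "nat \<Rightarrow> real" where
  "base_share d = (if d = 1 then 1 else if d = 2 then 1/2 else if d = 3 then 3/10
     else if d = 4 then 1/4 else if d = 5 then 1/5 else 0)"

definition share :: "'a set set \<Rightarrow> 'a set \<Rightarrow> 'a \<Rightarrow> 'a set \<Rightarrow> real" where
  "share E S v e =
    (if degree E v = 3 \<and> e \<inter> S \<noteq> {} then 7/20
     else if degree E v = 5 \<and> heavy E e then 1/4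
     else if degree E v = 5 \<and> touches_heavy E v then 3/16
     else base_share (degree E v))"

lemma share_nonneg: "0 \<le> share E S v e"
  unfolding share_def base_share_def by simp

lemma share_ge_3_16: "1 \<le> degree E v \<Longrightarrow> degree E v \<le> 5 \<Longrightarrow> 3/16 \<le> share E S v e"
  unfolding share_def base_share_def by auto

lemma share_ge_3_10: "1 \<le> degree E v \<Longrightarrow> degree E v \<le> 3 \<Longrightarrow> 3/10 \<le> share E S v e"
  unfolding share_def base_share_def by auto

lemma share_ge_7_20: "e \<inter> S \<noteq> {} \<Longrightarrow> 1 \<le> degree E v \<Longrightarrow> degree E v \<le> 3 \<Longrightarrow> 7/20 \<le> share E S v e"
  unfolding share_def base_share_def by auto

lemma share_degree_1: "degree E v = 1 \<Longrightarrow> share E S v e = 1"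
  unfolding share_def base_share_def by simp

lemma share_heavy: "heavy E e \<Longrightarrow> v \<in> e \<Longrightarrow> share E S v e = 1/4"
  unfolding share_def base_share_def heavy_def by auto

lemma share_eq_base_share:
  "e \<inter> S = {} \<Longrightarrow> \<not> heavy E e \<Longrightarrow> \<not> touches_heavy E v \<Longrightarrow> share E S v e = base_share (degree E v)"
  unfolding share_def by simp

lemma base_share_sum:
  fixes p q r :: nat
  assumes "p \<in> {1..5}" "q \<in> {1..5}" "r \<in> {1..5}"
    and "\<not> (p = 5 \<and> q = 5 \<and> r \<in> {4, 5})" "\<not> (p = 5 \<and> r = 5 \<and> q \<in> {4, 5})"
    "\<not> (q = 5 \<and> r = 5 \<and> p \<in> {4, 5})"
  shows "7/10 \<le> base_share p + base_share q + base_share r"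
proof -
  have "p \<in> {1, 2, 3, 4, 5}" "q \<in> {1, 2, 3, 4, 5}" "r \<in> {1, 2, 3, 4, 5}"
    using assms(1-3) by auto
  then show ?thesis
    using assms(4-6) unfolding base_share_def by (elim insertE emptyE) simp_all
qed

lemma heavy_degree_ge_4: "heavy E e \<Longrightarrow> v \<in> e \<Longrightarrow> 4 \<le> degree E v"
  unfolding heavy_def by auto

context crown_free_lin3graph
begin

lemma heavy_neighbour_degree_le_3:
  assumes "e \<in> E" "heavy E e" "v \<in> e" "w \<in> neighbours E v" "w \<notin> e"
  shows "degree E w \<le> 3"
proof -
  obtain x y z where e: "e = {x, y, z}" "degree E x = 5" "degree E y = 5" "degree E z \<in> {4, 5}"
    using assms(2) unfolding heavy_def by blast
  then have "heavy_edge V E x y z"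
    using linear crown_free assms(1) by unfold_locales auto
  then show ?thesis
    by (rule heavy_edge.neighbour_degree_le_3) (use assms(3-5) e(1) in simp_all)
qed

lemma heavy_edges_unique:
  assumes "e \<in> E" "e' \<in> E" "heavy E e" "heavy E e'" "v \<in> e" "v \<in> e'"
  shows "e = e'"
proof (rule ccontr)
  assume "e \<noteq> e'"
  obtain w z where "e' = {v, w, z}" "distinct [v, w, z]"
    using assms(2,6) by (elim edge_through)
  then have "w \<in> e'" "w \<in> neighbours E v"
    using neighboursI[OF assms(2,6)] by auto
  moreover have "w \<notin> e"
    using edge_eqI[OF assms(1,2,5,6)] \<open>e \<noteq> e'\<close> \<open>distinct [v, w, z]\<close> calculation(1) by auto
  ultimately have "degree E w \<le> 3"
    using heavy_neighbour_degree_le_3[OF assms(1,3,5)] by blast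
  moreover have "4 \<le> degree E w"
    using heavy_degree_ge_4[OF assms(4)] \<open>w \<in> e'\<close> .
  ultimately show False
    by simp
qed
end

locale few_high_degree = crown_free_lin3graph +
  fixes S :: "'a set"
  assumes S_def: "S = {v \<in> V. 6 \<le> degree E v}" and card_S: "card S \<le> 2"
begin

lemma finite_S: "finite S"
  using finite_V S_def by simp

lemma degree_in_S: "x \<in> S \<Longrightarrow> 6 \<le> degree E x"
  using S_def by simp

lemma degree_outside_S: "e \<in> E \<Longrightarrow> v \<in> e \<Longrightarrow> v \<notin> S \<Longrightarrow> 1 \<le> degree E v \<and> degree E v \<le> 5"
  using degree_pos edge_subset S_def by fastforce

lemma edge_not_subset_S: "e \<in> E \<Longrightarrow> \<not> e \<subseteq> S"
  using card_mono[OF finite_S, of e] card_S card_edge by fastforce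

lemma vertex_share_degree_3:
  assumes "v \<notin> S" "degree E v = 3"
  shows "(\<Sum>e\<in>{e \<in> E. v \<in> e}. share E S v e) \<le> 1"
proof -
  have "card {e \<in> {e \<in> E. v \<in> e}. e \<inter> S \<noteq> {}} \<le> 2"
    using card_edges_meeting[OF finite_S assms(1)] card_S by (simp add: conj_assoc)
  then have "(\<Sum>e\<in>{e \<in> E. v \<in> e}. share E S v e) \<le> 3/10 * degree E v + (7/20 - 3/10) * 2"
    unfolding degree_def using assms(2) finite_E
    by (intro sum_le_two_valued) (auto simp: share_def base_share_def degree_def)
  then show ?thesis
    using assms(2) by simp
qed

lemma vertex_share_touching_heavy:
  assumes "degree E v = 5" "touches_heavy E v"
  shows "(\<Sum>e\<in>{e \<in> E. v \<in> e}. share E S v e) \<le> 1"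
proof -
  have "card {e \<in> {e \<in> E. v \<in> e}. heavy E e} \<le> Suc 0"
    using heavy_edges_unique by (subst card_le_Suc0_iff_eq) (use finite_E in auto)
  then have "(\<Sum>e\<in>{e \<in> E. v \<in> e}. share E S v e) \<le> 3/16 * degree E v + (1/4 - 3/16) * 1"
    unfolding degree_def using assms finite_E
    by (intro sum_le_two_valued) (auto simp: share_def degree_def)
  then show ?thesis
    using assms(1) by simp
qed

lemma vertex_share_le_1:
  assumes "v \<in> V" "v \<notin> S"
  shows "(\<Sum>e\<in>{e \<in> E. v \<in> e}. share E S v e) \<le> 1"
proof -
  have "degree E v \<le> 5"
    using assms S_def by auto
  then consider "degree E v \<in> {0, 1, 2, 4}" | "degree E v = 3"
    | "degree E v = 5" "\<not> touches_heavy E v" | "degree E v = 5" "touches_heavy E v"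
    by force
  then show ?thesis
  proof cases
    case 1
    then have "share E S v e = base_share (degree E v)" for e
      by (auto simp: share_def)
    then have "(\<Sum>e\<in>{e \<in> E. v \<in> e}. share E S v e) = degree E v * base_share (degree E v)"
      unfolding degree_def by simp
    also have "\<dots> \<le> 1"
      using 1 by (auto simp: base_share_def)
    finally show ?thesis .
  next
    case 3
    then have "share E S v e = 1/5" if "e \<in> {e \<in> E. v \<in> e}" for e
      using that unfolding share_def base_share_def touches_heavy_def by auto
    then have "(\<Sum>e\<in>{e \<in> E. v \<in> e}. share E S v e) = (\<Sum>e\<in>{e \<in> E. v \<in> e}. 1/5)"
      by (intro sum.cong) auto
    then show ?thesis
      using 3 unfolding degree_def by simp
  qed (use vertex_share_degree_3 vertex_share_touching_heavy assms in auto)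
qed


lemma share_two_in_S:
  assumes "{x, y, z} \<in> E" "x \<in> S" "y \<in> S"
  shows "share E S z e = 1"
proof -
  have "{z, x, y} \<in> E"
    using assms(1) by (simp add: insert_commute)
  then have "\<not> 2 \<le> degree E z"
    using no_edge_2_4_6 degree_in_S assms(2,3) by fastforce
  moreover have "0 < degree E z"
    using degree_pos[OF assms(1)] by simp
  ultimately show ?thesis
    by (intro share_degree_1) simp
qed

lemma share_one_in_S:
  assumes xyz: "{x, y, z} \<in> E" and "x \<in> S" "y \<notin> S" "z \<notin> S"
  shows "7/10 \<le> share E S y {x, y, z} + share E S z {x, y, z}"
proof -
  have "{y, z, x} \<in> E" "{z, y, x} \<in> E"
    using xyz by (simp_all add: insert_commute)
  then have not_2_4: "\<not> (2 \<le> degree E y \<and> 4 \<le> degree E z)" "\<not> (2 \<le> degree E z \<and> 4 \<le> degree E y)"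
    using no_edge_2_4_6 degree_in_S[OF assms(2)] by blast+
  have deg: "1 \<le> degree E y" "1 \<le> degree E z"
    using degree_outside_S[OF xyz] assms(3,4) by auto
  have meets: "{x, y, z} \<inter> S \<noteq> {}"
    using assms(2) by blast
  show ?thesis
  proof (cases "degree E y = 1 \<or> degree E z = 1")
    case True
    then show ?thesis
      using share_degree_1[of E y S] share_degree_1[of E z S]
        share_nonneg[of E S y] share_nonneg[of E S z] by fastforce
  next
    case False
    then have "degree E y \<le> 3" "degree E z \<le> 3"
      using not_2_4 deg by auto
    then show ?thesis
      using share_ge_7_20[OF meets, of E y] share_ge_7_20[OF meets, of E z] deg by simp
  qed
qed

lemma edge_share_touching_heavy:
  assumes xyz: "{x, y, z} \<in> E" "{x, y, z} \<inter> S = {}" "\<not> heavy E {x, y, z}"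
    and "touches_heavy E x"
  shows "7/10 \<le> share E S x {x, y, z} + share E S y {x, y, z} + share E S z {x, y, z}"
proof -
  obtain e' where e': "e' \<in> E" "heavy E e'" "x \<in> e'"
    using assms(4) unfolding touches_heavy_def by blast
  have dist: "distinct [x, y, z]"
    using edge_distinct[OF xyz(1)] .
  have "e' \<noteq> {x, y, z}"
    using assms(3) e'(2) by blast
  then have "y \<notin> e'" "z \<notin> e'"
    using edge_eqI[OF xyz(1) e'(1), of x y] edge_eqI[OF xyz(1) e'(1), of x z] e'(3) dist by auto
  moreover have "y \<in> neighbours E x" "z \<in> neighbours E x"
    using neighboursI[OF xyz(1), of x y] neighboursI[OF xyz(1), of x z] dist by auto
  ultimately have "degree E y \<le> 3" "degree E z \<le> 3"
    using heavy_neighbour_degree_le_3[OF e'] by simp_all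
  moreover have "1 \<le> degree E x" "degree E x \<le> 5" "1 \<le> degree E y" "1 \<le> degree E z"
    using degree_outside_S[OF xyz(1)] xyz(2) by auto
  ultimately have "3/16 \<le> share E S x {x, y, z}" "3/10 \<le> share E S y {x, y, z}"
    "3/10 \<le> share E S z {x, y, z}"
    using share_ge_3_16 share_ge_3_10 by simp_all
  then show ?thesis
    by simp
qed

lemma edge_share_plain:
  assumes xyz: "{x, y, z} \<in> E" "{x, y, z} \<inter> S = {}" "\<not> heavy E {x, y, z}"
    and "\<forall>v\<in>{x, y, z}. \<not> touches_heavy E v"
  shows "7/10 \<le> share E S x {x, y, z} + share E S y {x, y, z} + share E S z {x, y, z}"
proof -
  have dist: "distinct [x, y, z]"
    using edge_distinct[OF xyz(1)] .
  have "{x, z, y} = {x, y, z}" "{y, z, x} = {x, y, z}"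
    by (simp_all add: insert_commute)
  then have "\<not> heavy E {x, y, z}" "\<not> heavy E {x, z, y}" "\<not> heavy E {y, z, x}"
    using assms(3) by simp_all
  then have "\<not> (degree E x = 5 \<and> degree E y = 5 \<and> degree E z \<in> {4, 5})"
    "\<not> (degree E x = 5 \<and> degree E z = 5 \<and> degree E y \<in> {4, 5})"
    "\<not> (degree E y = 5 \<and> degree E z = 5 \<and> degree E x \<in> {4, 5})"
    using dist unfolding heavy_def by (metis distinct_length_2_or_more distinct_singleton)+
  moreover have "degree E x \<in> {1..5}" "degree E y \<in> {1..5}" "degree E z \<in> {1..5}"
    using degree_outside_S[OF xyz(1)] xyz(2) by auto
  ultimately have "7/10 \<le> base_share (degree E x) + base_share (degree E y) + base_share (degree E z)"
    by (intro base_share_sum)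
  then show ?thesis
    using share_eq_base_share[OF xyz(2,3)] assms(4) by simp
qed

lemma edge_share_without_S:
  assumes "e \<in> E" "e \<inter> S = {}"
  shows "7/10 \<le> (\<Sum>v\<in>e. share E S v e)"
proof (cases "heavy E e")
  case True
  then have "(\<Sum>v\<in>e. share E S v e) = (\<Sum>v\<in>e. 1/4)"
    using share_heavy by (intro sum.cong) auto
  then show ?thesis
    using card_edge[OF assms(1)] by simp
next
  case False
  obtain x where x: "x \<in> e" "touches_heavy E x \<or> (\<forall>u\<in>e. \<not> touches_heavy E u)"
    using card_edge[OF assms(1)] by (metis card.empty ex_in_conv zero_neq_numeral)
  then obtain y z where e: "e = {x, y, z}" "distinct [x, y, z]"
    using assms(1) by (elim edge_through)
  then have "(\<Sum>v\<in>e. share E S v e) = share E S x e + share E S y e + share E S z e"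
    by simp
  then show ?thesis
    using x(2) edge_share_touching_heavy[of x y z] edge_share_plain[of x y z] assms False
    unfolding e(1) by argo
qed

lemma edge_share_ge:
  assumes "e \<in> E"
  shows "7/10 \<le> (\<Sum>v\<in>e - S. share E S v e)"
proof (cases "e \<inter> S = {}")
  case True
  then show ?thesis
    using edge_share_without_S[OF assms] by (simp add: Diff_triv)
next
  case False
  then obtain x where "x \<in> e" "x \<in> S"
    by blast
  then obtain y z where e: "e = {x, y, z}" "distinct [x, y, z]"
    using assms by (elim edge_through)
  have xyz: "{x, y, z} \<in> E" "{x, z, y} \<in> E"
    using assms e(1) by (simp_all add: insert_commute)
  have "\<not> {x, y, z} \<subseteq> S"
    by (rule edge_not_subset_S[OF xyz(1)])
  then consider "y \<in> S" "z \<notin> S" | "z \<in> S" "y \<notin> S" | "y \<notin> S" "z \<notin> S"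
    using \<open>x \<in> S\<close> by blast
  then show ?thesis
  proof cases
    case 1
    then have "e - S = {z}"
      using e \<open>x \<in> S\<close> by auto
    then show ?thesis
      using share_two_in_S[OF xyz(1) \<open>x \<in> S\<close> 1(1)] by simp
  next
    case 2
    then have "e - S = {y}"
      using e \<open>x \<in> S\<close> by auto
    then show ?thesis
      using share_two_in_S[OF xyz(2) \<open>x \<in> S\<close> 2(1)] by simp
  next
    case 3
    then have "e - S = {y, z}"
      using e \<open>x \<in> S\<close> by auto
    then show ?thesis
      using share_one_in_S[OF xyz(1) \<open>x \<in> S\<close> 3] e by simp
  qed
qed
end

theorem theorem1p2:
  fixes V :: "'a set" and E :: "'a set set"
  assumes "linear_3graph V E"
    and "crown_free E"
    and "card {v \<in> V. degree E v \<ge> 6} \<le> 2"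
  shows "real (card E) \<le> 10 * (real (card V) - real (card {v \<in> V. degree E v \<ge> 6})) / 7"
proof -
  define S where "S = {v \<in> V. 6 \<le> degree E v}"
  interpret few_high_degree V E S
    using assms unfolding S_def by unfold_locales auto
  have "real (card E) * (7/10) = (\<Sum>e\<in>E. 7/10)"
    by simp
  also have "\<dots> \<le> (\<Sum>e\<in>E. \<Sum>v\<in>e - S. share E S v e)"
    by (intro sum_mono edge_share_ge)
  also have "\<dots> = (\<Sum>v\<in>V - S. \<Sum>e\<in>{e \<in> E. v \<in> e}. share E S v e)"
    by (rule double_counting)
  also have "\<dots> \<le> (\<Sum>v\<in>V - S. 1)"
    by (intro sum_mono vertex_share_le_1) auto
  also have "\<dots> = real (card V) - real (card S)"
    using finite_V by (simp add: S_def card_Diff_subset of_nat_diff card_mono)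
  finally show ?thesis
    unfolding S_def by simp
qed

end
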